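(* Let $G$ be a bipartite cactus graph with $n\ge4$ vertices and $m$ edges, with degree sequence $d$, and suppose $\beta\ge 1$, where $\beta=\max\{\mu_1,\tfrac12(\mu_1+\mu_{odd})\}$. Then $m\le \left\lfloor\frac{4(n-1)-\beta}{3}\right\rfloor$.
   Context: A cactus graph is a connected simple graph in which every edge belongs to at most one cycle; a bi-cactus is a bipartite cactus. For the degree sequence $d$, $\mu_1$ is the number of entries equal to $1$ and $\mu_{odd}$ is the number of entries that are odd integers greater than $1$. *)

theory Defs
  imports Complex_Main
begin

definition simple_graph :: "'a set \<Rightarrow> 'a set set \<Rightarrow> bool" where
  "simple_graph V E \<longleftrightarrow> finite V \<and> (\<forall>e\<in>E. e \<subseteq> V \<and> card e = 2)"

definition is_walk :: "'a set set \<Rightarrow> 'a list \<Rightarrow> bool" where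
  "is_walk E xs \<longleftrightarrow> xs \<noteq> [] \<and> (\<forall>i. Suc i < length xs \<longrightarrow> {xs ! i, xs ! Suc i} \<in> E)"

definition connected_graph :: "'a set \<Rightarrow> 'a set set \<Rightarrow> bool" where
  "connected_graph V E \<longleftrightarrow>
     (\<forall>u\<in>V. \<forall>v\<in>V. \<exists>xs. is_walk E xs \<and> hd xs = u \<and> last xs = v)"

text \<open>A cycle is given by a list of distinct vertices v0,...,v(k-1), k >= 3,
with v(i) v(i+1) adjacent (indices mod k); as a subgraph it is determined by its edge set.\<close>

definition is_cycle :: "'a set set \<Rightarrow> 'a list \<Rightarrow> bool" where
  "is_cycle E xs \<longleftrightarrow> length xs \<ge> 3 \<and> distinct xs \<and>
     (\<forall>i < length xs. {xs ! i, xs ! ((Suc i) mod length xs)} \<in> E)"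

definition cycle_edges :: "'a list \<Rightarrow> 'a set set" where
  "cycle_edges xs = {{xs ! i, xs ! ((Suc i) mod length xs)} | i. i < length xs}"

definition cactus :: "'a set \<Rightarrow> 'a set set \<Rightarrow> bool" where
  "cactus V E \<longleftrightarrow> simple_graph V E \<and> connected_graph V E \<and>
     (\<forall>e\<in>E. \<forall>C1 C2. is_cycle E C1 \<and> is_cycle E C2 \<and>
        e \<in> cycle_edges C1 \<and> e \<in> cycle_edges C2 \<longrightarrow> cycle_edges C1 = cycle_edges C2)"

definition bipartite :: "'a set \<Rightarrow> 'a set set \<Rightarrow> bool" where
  "bipartite V E \<longleftrightarrow> (\<exists>X. X \<subseteq> V \<and> (\<forall>e\<in>E. card (e \<inter> X) = 1))"

definition bi_cactus :: "'a set \<Rightarrow> 'a set set \<Rightarrow> bool" where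
  "bi_cactus V E \<longleftrightarrow> cactus V E \<and> bipartite V E"

definition degree :: "'a set set \<Rightarrow> 'a \<Rightarrow> nat" where
  "degree E v = card {e\<in>E. v \<in> e}"

definition mu1 :: "'a set \<Rightarrow> 'a set set \<Rightarrow> nat" where
  "mu1 V E = card {v\<in>V. degree E v = 1}"

definition mu_odd :: "'a set \<Rightarrow> 'a set set \<Rightarrow> nat" where
  "mu_odd V E = card {v\<in>V. odd (degree E v) \<and> degree E v > 1}"

definition beta :: "'a set \<Rightarrow> 'a set set \<Rightarrow> real" where
  "beta V E = max (real (mu1 V E)) ((real (mu1 V E) + real (mu_odd V E)) / 2)"

end

theory Submission
  imports Defs
begin

text \<open>The cycles of a cactus are edge-disjoint, and in a bipartite graph they have length
  at least 4. Deleting one edge from each of the c cycles leaves a forest, so m - c \<le> n - 1;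
  the b bridges and the edges of the cycles give m \<ge> b + 4 c. Together, 3 m + b \<le> 4 (n - 1).
  It remains to see \<beta> \<le> b. The edge at a leaf is a bridge, and for n \<ge> 3 distinct leaves
  have distinct edges, so mu1 \<le> b. A vertex on no bridge has even degree, so all
  odd-degree vertices are endpoints of bridges, whence mu1 + mu_odd \<le> 2 b.\<close>

definition next_index :: "nat \<Rightarrow> nat \<Rightarrow> nat" where
  "next_index k i = (if Suc i = k then 0 else Suc i)"

lemma Suc_mod_eq_next_index: "i < k \<Longrightarrow> Suc i mod k = next_index k i"
  by (auto simp: next_index_def)

lemma next_index_less: "i < k \<Longrightarrow> next_index k i < k"
  by (auto simp: next_index_def)

lemma cycle_edges_eq_image:
  "cycle_edges xs = (\<lambda>i. {xs ! i, xs ! next_index (length xs) i}) ` {..<length xs}"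
  unfolding cycle_edges_def by (auto simp: Suc_mod_eq_next_index)

lemma is_cycle_iff_next_index:
  "is_cycle E xs \<longleftrightarrow> length xs \<ge> 3 \<and> distinct xs \<and>
     (\<forall>i < length xs. {xs ! i, xs ! next_index (length xs) i} \<in> E)"
  unfolding is_cycle_def by (auto simp: Suc_mod_eq_next_index)

lemma cycle_edges_subset: "is_cycle E C \<Longrightarrow> cycle_edges C \<subseteq> E"
  unfolding is_cycle_iff_next_index cycle_edges_eq_image by auto

lemma is_cycle_mono: "is_cycle E' C \<Longrightarrow> E' \<subseteq> E \<Longrightarrow> is_cycle E C"
  unfolding is_cycle_def by auto

lemma cycle_edge_subset_set: "e \<in> cycle_edges C \<Longrightarrow> e \<subseteq> set C"
  unfolding cycle_edges_eq_image by (auto intro!: nth_mem next_index_less)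

lemma card_cycle_edges:
  assumes "is_cycle E C"
  shows "card (cycle_edges C) = length C"
proof -
  let ?k = "length C"
  have k3: "?k \<ge> 3" and dist: "distinct C" using assms by (auto simp: is_cycle_def)
  have "inj_on (\<lambda>i. {C ! i, C ! next_index ?k i}) {..<?k}"
  proof (rule inj_onI)
    fix i j assume i: "i \<in> {..<?k}" and j: "j \<in> {..<?k}"
      and eq: "{C ! i, C ! next_index ?k i} = {C ! j, C ! next_index ?k j}"
    have ni: "next_index ?k i < ?k" "next_index ?k j < ?k" using i j next_index_less by auto
    from eq consider "C ! i = C ! j"
      | "C ! i = C ! next_index ?k j \<and> C ! next_index ?k i = C ! j"
      by (auto simp: doubleton_eq_iff)
    then show "i = j"
    proof cases
      case 1
      then show ?thesis using dist i j by (simp add: nth_eq_iff_index_eq)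
    next
      case 2
      then have "i = next_index ?k j" "next_index ?k i = j"
        using dist i j ni by (auto simp: nth_eq_iff_index_eq)
      then show ?thesis using k3 by (auto simp: next_index_def split: if_splits)
    qed
  qed
  then show ?thesis unfolding cycle_edges_eq_image by (simp add: card_image)
qed

lemma card_cycle_edges_at_vertex:
  assumes "is_cycle E C" and "v \<in> set C"
  shows "card {e \<in> cycle_edges C. v \<in> e} = 2"
proof -
  let ?k = "length C"
  have k3: "?k \<ge> 3" and dist: "distinct C" using assms by (auto simp: is_cycle_def)
  obtain i where i: "i < ?k" "C ! i = v" using assms(2) by (auto simp: in_set_conv_nth)
  define p where "p = (if i = 0 then ?k - 1 else i - 1)"
  have p: "p < ?k" "next_index ?k p = i" using i k3 by (auto simp: p_def next_index_def)
  have ni: "next_index ?k i < ?k" using i next_index_less by auto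
  have edges_at_v: "{e \<in> cycle_edges C. v \<in> e} = {{v, C ! next_index ?k i}, {C ! p, v}}"
  proof (intro equalityI subsetI)
    fix e assume "e \<in> {e \<in> cycle_edges C. v \<in> e}"
    then obtain j where j: "j < ?k" "e = {C ! j, C ! next_index ?k j}" "v \<in> e"
      unfolding cycle_edges_eq_image by auto
    have nj: "next_index ?k j < ?k" using j next_index_less by auto
    from j consider "C ! j = C ! i" | "C ! next_index ?k j = C ! i" using i by auto
    then show "e \<in> {{v, C ! next_index ?k i}, {C ! p, v}}"
    proof cases
      case 1
      then show ?thesis using j i nth_eq_iff_index_eq[OF dist j(1) i(1)] by simp
    next
      case 2
      then have "next_index ?k j = i" using nth_eq_iff_index_eq[OF dist nj i(1)] by simp
      then have "j = p" using j k3 i by (auto simp: p_def next_index_def split: if_splits)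
      then show ?thesis using j p i by simp
    qed
  next
    fix e assume "e \<in> {{v, C ! next_index ?k i}, {C ! p, v}}"
    moreover have "{v, C ! next_index ?k i} \<in> cycle_edges C"
      unfolding cycle_edges_eq_image using i by blast
    moreover have "{C ! p, v} \<in> cycle_edges C"
      unfolding cycle_edges_eq_image using p i by force
    ultimately show "e \<in> {e \<in> cycle_edges C. v \<in> e}" by auto
  qed
  have "C ! next_index ?k i \<noteq> C ! p"
    using dist ni p i k3 by (auto simp: nth_eq_iff_index_eq p_def next_index_def split: if_splits)
  moreover have "C ! next_index ?k i \<noteq> v"
    using dist i ni k3 by (auto simp: nth_eq_iff_index_eq next_index_def)
  ultimately have "{v, C ! next_index ?k i} \<noteq> {C ! p, v}" by (auto simp: doubleton_eq_iff)
  then show ?thesis unfolding edges_at_v by simp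
qed

lemma bipartite_cycle_length_ge_4:
  assumes "bipartite V E" and "is_cycle E C"
  shows "length C \<ge> 4"
proof (rule ccontr)
  assume "\<not> length C \<ge> 4"
  with assms(2) have "length C = 3" by (auto simp: is_cycle_def)
  then obtain a b c where C: "C = [a, b, c]" by (auto simp: numeral_3_eq_3 length_Suc_conv)
  obtain X where X: "\<forall>e\<in>E. card (e \<inter> X) = 1" using assms(1) by (auto simp: bipartite_def)
  have sides: "(x \<in> X) \<noteq> (y \<in> X)" if "{x, y} \<in> E" "x \<noteq> y" for x y
    using X that by (cases "x \<in> X"; cases "y \<in> X") (auto dest!: bspec)
  have edge: "{C ! i, C ! (Suc i mod 3)} \<in> E" if "i < 3" for i
    using assms(2) that \<open>length C = 3\<close> by (auto simp: is_cycle_def)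
  have "{a, b} \<in> E" "{b, c} \<in> E" "{c, a} \<in> E"
    using edge[of 0] edge[of 1] edge[of 2] unfolding C by simp_all
  moreover have "a \<noteq> b" "b \<noteq> c" "c \<noteq> a" using assms(2) unfolding C is_cycle_def by auto
  ultimately show False using sides by blast
qed

definition is_path :: "'a set \<Rightarrow> 'a set set \<Rightarrow> 'a list \<Rightarrow> bool" where
  "is_path V E xs \<longleftrightarrow> xs \<noteq> [] \<and> distinct xs \<and> set xs \<subseteq> V \<and>
     (\<forall>i. Suc i < length xs \<longrightarrow> {xs ! i, xs ! Suc i} \<in> E)"

lemma finite_edges: "simple_graph V E \<Longrightarrow> finite E"
  unfolding simple_graph_def by (meson Pow_iff finite_Pow_iff finite_subset subsetI)

lemma path_length_le_card: "finite V \<Longrightarrow> is_path V E xs \<Longrightarrow> length xs \<le> card V"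
  unfolding is_path_def by (metis card_mono distinct_card)

lemma longest_path_contains_neighbours:
  assumes "simple_graph V E" and "is_path V E xs"
    and longest: "\<And>ys. is_path V E ys \<Longrightarrow> length ys \<le> length xs"
    and "{hd xs, y} \<in> E" and "y \<noteq> hd xs"
  shows "y \<in> set xs"
proof (rule ccontr)
  assume "y \<notin> set xs"
  moreover have "y \<in> V" using assms(1,4) by (auto simp: simple_graph_def)
  ultimately have "is_path V E (y # xs)"
    using assms(2,4) by (auto simp: is_path_def nth_Cons hd_conv_nth insert_commute split: nat.split)
  then show False using longest by fastforce
qed

lemma path_closed_by_edge_is_cycle:
  assumes "is_path V E xs" and "2 \<le> j" and "j < length xs" and "{xs ! 0, xs ! j} \<in> E"
  shows "is_cycle E (take (Suc j) xs)"
  unfolding is_cycle_def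
proof (intro conjI allI impI)
  let ?C = "take (Suc j) xs"
  show "3 \<le> length ?C" "distinct ?C" using assms(1-3) by (auto simp: is_path_def)
  fix i assume "i < length ?C"
  then consider "i < j" | "i = j" using assms(3) by fastforce
  then show "{?C ! i, ?C ! (Suc i mod length ?C)} \<in> E"
  proof cases
    case 1
    then show ?thesis using assms(1,3) by (simp add: is_path_def)
  next
    case 2
    then show ?thesis using assms(3,4) by (simp add: insert_commute)
  qed
qed

text \<open>The first vertex of a longest path has all its neighbours on the path; if one of them
  is not its successor, that edge closes a cycle.\<close>

lemma cycle_exists_if_degree_ge_2:
  assumes sg: "simple_graph V E" and "V \<noteq> {}" and deg: "\<forall>u\<in>V. 2 \<le> degree E u"
  shows "\<exists>C. is_cycle E C"
proof -
  have fV: "finite V" and edges: "\<forall>e\<in>E. e \<subseteq> V \<and> card e = 2"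
    using sg by (auto simp: simple_graph_def)
  obtain v where "v \<in> V" using assms(2) by blast
  then have "is_path V E [v]" by (simp add: is_path_def)
  moreover have "\<forall>ys. is_path V E ys \<longrightarrow> length ys < Suc (card V)"
    using path_length_le_card[OF fV] by (simp add: less_Suc_eq_le)
  ultimately obtain xs where xs: "is_path V E xs"
    and longest: "\<And>ys. is_path V E ys \<Longrightarrow> length ys \<le> length xs"
    using ex_has_greatest_nat[of "is_path V E" _ length] by metis
  define x where "x = xs ! 0"
  have "xs \<noteq> []" using xs by (simp add: is_path_def)
  then have hd_xs: "hd xs = x" and "x \<in> V" using xs by (auto simp: x_def hd_conv_nth is_path_def)
  have "\<exists>j. 2 \<le> j \<and> j < length xs \<and> {x, xs ! j} \<in> E"
  proof (rule ccontr)
    assume no_chord: "\<not> ?thesis"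
    have "{e\<in>E. x \<in> e} \<subseteq> {{x, xs ! 1}}"
    proof
      fix e assume e: "e \<in> {e\<in>E. x \<in> e}"
      then have "card e = 2" "x \<in> e" using edges by auto
      then have "\<exists>y. y \<noteq> x \<and> e = {x, y}" by (auto simp: card_2_iff)
      then obtain y where y: "y \<noteq> x" "e = {x, y}" by blast
      then have "y \<in> set xs"
        using longest_path_contains_neighbours[OF sg xs longest] e hd_xs by auto
      then obtain j where j: "j < length xs" "xs ! j = y" by (auto simp: in_set_conv_nth)
      have "j \<noteq> 0" using j(2) y(1) x_def by metis
      moreover have "\<not> 2 \<le> j" using no_chord j e y by auto
      ultimately have "j = 1" by linarith
      then show "e \<in> {{x, xs ! 1}}" using j y by simp
    qed
    then have "card {e\<in>E. x \<in> e} \<le> card {{x, xs ! 1}}" by (intro card_mono) auto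
    then have "degree E x \<le> 1" by (simp add: degree_def)
    then show False using deg \<open>x \<in> V\<close> by fastforce
  qed
  then show ?thesis using path_closed_by_edge_is_cycle[OF xs] x_def by blast
qed

lemma card_edges_eq_delete_vertex:
  "finite E \<Longrightarrow> card E = card {e\<in>E. v \<notin> e} + degree E v"
proof -
  assume "finite E"
  moreover have "E = {e\<in>E. v \<notin> e} \<union> {e\<in>E. v \<in> e}" by blast
  ultimately show ?thesis unfolding degree_def by (metis (no_types, lifting) card_Un_disjoint
      disjoint_iff finite_Un mem_Collect_eq)
qed

lemma acyclic_card_edges_less:
  assumes "simple_graph V E" and "\<forall>C. \<not> is_cycle E C" and "V \<noteq> {}"
  shows "card E < card V"
  using assms
proof (induction "card V" arbitrary: V E rule: less_induct)
  case less
  have fV: "finite V" and edges: "\<forall>e\<in>E. e \<subseteq> V \<and> card e = 2"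
    using less.prems by (auto simp: simple_graph_def)
  obtain v where v: "v \<in> V" "\<not> 2 \<le> degree E v"
    using cycle_exists_if_degree_ge_2[OF less.prems(1,3)] less.prems(2) by blast
  define V' where "V' = V - {v}"
  define E' where "E' = {e\<in>E. v \<notin> e}"
  have card_E: "card E = card E' + degree E v"
    unfolding E'_def using card_edges_eq_delete_vertex finite_edges[OF less.prems(1)] .
  show ?case
  proof (cases "V' = {}")
    case True
    then have "V = {v}" using v(1) V'_def by blast
    have "E = {}"
    proof (rule ccontr)
      assume "E \<noteq> {}"
      then obtain e where "e \<subseteq> {v}" "card e = 2" using edges \<open>V = {v}\<close> by blast
      then show False using card_mono[of "{v}" e] by simp
    qed
    then show ?thesis using fV v(1) by (auto simp: card_gt_0_iff)
  next
    case False
    have "simple_graph V' E'" using fV edges unfolding simple_graph_def V'_def E'_def by auto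
    moreover have "\<forall>C. \<not> is_cycle E' C" using less.prems(2) is_cycle_mono E'_def by blast
    moreover have card_V': "card V' = card V - 1" using v fV V'_def by simp
    moreover have "card V' < card V" unfolding V'_def by (rule card_Diff1_less[OF fV v(1)])
    ultimately have "card E' < card V'" using less.hyps False by blast
    then show ?thesis using card_E card_V' v(2) by linarith
  qed
qed

definition cycle_edge_sets :: "'a set set \<Rightarrow> 'a set set set" where
  "cycle_edge_sets E = {cycle_edges C | C. is_cycle E C}"

definition bridges :: "'a set set \<Rightarrow> 'a set set" where
  "bridges E = E - \<Union>(cycle_edge_sets E)"

lemma cycle_edge_sets_subset: "k \<in> cycle_edge_sets E \<Longrightarrow> k \<subseteq> E"
  unfolding cycle_edge_sets_def using cycle_edges_subset by blast

lemma finite_cycle_edge_sets: "finite E \<Longrightarrow> finite (cycle_edge_sets E)"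
  by (metis Pow_iff cycle_edge_sets_subset finite_Pow_iff finite_subset subsetI)

lemma cactus_cycle_edge_sets_disjoint:
  assumes "cactus V E"
  shows "pairwise disjnt (cycle_edge_sets E)"
proof (rule pairwiseI)
  fix k1 k2 assume "k1 \<in> cycle_edge_sets E" "k2 \<in> cycle_edge_sets E" "k1 \<noteq> k2"
  then obtain C1 C2 where "is_cycle E C1" "k1 = cycle_edges C1" "is_cycle E C2" "k2 = cycle_edges C2"
    unfolding cycle_edge_sets_def by blast
  with assms \<open>k1 \<noteq> k2\<close> show "disjnt k1 k2"
    unfolding cactus_def disjnt_def using cycle_edges_subset by blast
qed

text \<open>Deleting one edge from every cycle edge set leaves a forest.\<close>

lemma card_edges_less_card_vertices_plus_cycles:
  assumes sg: "simple_graph V E" and "V \<noteq> {}"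
  shows "card E < card V + card (cycle_edge_sets E)"
proof -
  let ?K = "cycle_edge_sets E"
  have fE: "finite E" using finite_edges[OF sg] .
  define F where "F = (\<lambda>k. SOME e. e \<in> k) ` ?K"
  have chosen: "(SOME e. e \<in> k) \<in> k" if k: "k \<in> ?K" for k
  proof -
    obtain C where "is_cycle E C" "k = cycle_edges C" using k unfolding cycle_edge_sets_def by blast
    then have "k \<noteq> {}" using card_cycle_edges by (fastforce simp: is_cycle_def)
    then show ?thesis by (simp add: some_in_eq)
  qed
  have F_sub: "F \<subseteq> E" using chosen cycle_edge_sets_subset unfolding F_def by blast
  have "\<not> is_cycle (E - F) C" for C
  proof
    assume C: "is_cycle (E - F) C"
    then have k: "cycle_edges C \<in> ?K"
      using is_cycle_mono unfolding cycle_edge_sets_def by blast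
    then have "(SOME e. e \<in> cycle_edges C) \<in> F" unfolding F_def by blast
    moreover have "(SOME e. e \<in> cycle_edges C) \<in> E - F" using chosen[OF k] cycle_edges_subset[OF C] by blast
    ultimately show False by blast
  qed
  moreover have "simple_graph V (E - F)" using sg unfolding simple_graph_def by auto
  ultimately have "card (E - F) < card V" using acyclic_card_edges_less assms(2) by blast
  moreover have "card F \<le> card ?K" unfolding F_def using card_image_le finite_cycle_edge_sets[OF fE] by blast
  moreover have "card E \<le> card (E - F) + card F" using fE F_sub by (simp add: card_Diff_subset finite_subset card_mono)
  ultimately show ?thesis by linarith
qed

lemma cactus_girth_card_edges_ge:
  assumes cac: "cactus V E" and girth: "\<And>C. is_cycle E C \<Longrightarrow> g \<le> length C"
  shows "g * card (cycle_edge_sets E) + card (bridges E) \<le> card E"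
proof -
  let ?K = "cycle_edge_sets E"
  have fE: "finite E" using cac finite_edges by (auto simp: cactus_def)
  have fk: "finite k" if "k \<in> ?K" for k using that cycle_edge_sets_subset fE finite_subset by blast
  have "g * card ?K = (\<Sum>k\<in>?K. g)" by simp
  also have "\<dots> \<le> (\<Sum>k\<in>?K. card k)"
    using girth card_cycle_edges by (intro sum_mono) (fastforce simp: cycle_edge_sets_def)
  also have "\<dots> = card (\<Union>?K)"
    using card_Union_disjoint[OF cactus_cycle_edge_sets_disjoint[OF cac] fk] by simp
  finally have "g * card ?K + card (bridges E) \<le> card (\<Union>?K) + card (E - \<Union>?K)"
    unfolding bridges_def by simp
  also have "\<dots> = card E"
  proof -
    have "\<Union>?K \<subseteq> E" using cycle_edge_sets_subset by blast
    then show ?thesis using card_mono[OF fE] card_Diff_subset[OF finite_subset[OF _ fE]] by fastforce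
  qed
  finally show ?thesis .
qed

lemma cactus_card_edges_bound:
  assumes cac: "cactus V E" and "V \<noteq> {}" and girth: "\<And>C. is_cycle E C \<Longrightarrow> g \<le> length C"
  shows "g * card E + card (bridges E) + g \<le> g * card V + card E"
proof -
  let ?k = "card (cycle_edge_sets E)"
  have "card E + 1 \<le> card V + ?k"
    using card_edges_less_card_vertices_plus_cycles assms(1,2) by (fastforce simp: cactus_def)
  then have "g * card E + g \<le> g * card V + g * ?k"
    by (metis add_mult_distrib2 mult.right_neutral mult_le_mono2)
  moreover have "g * ?k + card (bridges E) \<le> card E" using cactus_girth_card_edges_ge[OF cac girth] .
  ultimately show ?thesis by linarith
qed

lemma degree_ge_2_if_on_cycle:
  assumes "simple_graph V E" and "is_cycle E C" and "v \<in> set C"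
  shows "2 \<le> degree E v"
proof -
  have "2 = card {e \<in> cycle_edges C. v \<in> e}" using card_cycle_edges_at_vertex[OF assms(2,3)] ..
  also have "\<dots> \<le> degree E v" unfolding degree_def
    using cycle_edges_subset[OF assms(2)] finite_edges[OF assms(1)] by (intro card_mono) auto
  finally show ?thesis .
qed

lemma walk_last_in_closed_set:
  assumes closed: "\<And>z w. {z, w} \<in> E \<Longrightarrow> z \<in> S \<Longrightarrow> w \<in> S"
    and "is_walk E xs" and "hd xs \<in> S"
  shows "last xs \<in> S"
proof -
  have "xs ! i \<in> S" if "i < length xs" for i
    using that
  proof (induction i)
    case 0
    then show ?case using assms(3) by (simp add: hd_conv_nth)
  next
    case (Suc i)
    then show ?case using closed assms(2) unfolding is_walk_def by auto
  qed
  then show ?thesis using assms(2) by (simp add: is_walk_def last_conv_nth)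
qed

lemma edges_at_leaf:
  assumes "degree E u = 1" and "e \<in> E" and "u \<in> e"
  shows "{e' \<in> E. u \<in> e'} = {e}"
proof -
  obtain a where a: "{e' \<in> E. u \<in> e'} = {a}"
    using assms(1) unfolding degree_def by (auto simp: card_1_singleton_iff)
  then have "e = a" using assms(2,3) by blast
  then show ?thesis using a by simp
qed

text \<open>Otherwise the edge would form a whole connected component.\<close>

lemma connected_leaves_not_adjacent:
  assumes sg: "simple_graph V E" and con: "connected_graph V E" and "3 \<le> card V"
    and uv: "{u, v} \<in> E" and "degree E u = 1" and "degree E v = 1"
  shows False
proof -
  have "{u, v} \<subseteq> V" using sg uv by (auto simp: simple_graph_def)
  moreover have "\<not> V \<subseteq> {u, v}"
  proof
    assume "V \<subseteq> {u, v}"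
    then have "card V \<le> card {u, v}" by (intro card_mono) auto
    also have "\<dots> \<le> 2" by (cases "u = v") auto
    finally show False using assms(3) by simp
  qed
  ultimately obtain w where "u \<in> V" "w \<in> V" "w \<notin> {u, v}" by blast
  then obtain xs where "is_walk E xs" "hd xs = u" "last xs = w"
    using con unfolding connected_graph_def by blast
  moreover have "w' \<in> {u, v}" if zw: "{z, w'} \<in> E" "z \<in> {u, v}" for z w'
  proof -
    have "{z, w'} \<in> {e \<in> E. z \<in> e}" using zw(1) by simp
    also have "{e \<in> E. z \<in> e} = {{u, v}}"
      using zw(2) edges_at_leaf[OF assms(5) uv] edges_at_leaf[OF assms(6) uv] by auto
    finally show ?thesis by auto
  qed
  ultimately show False using walk_last_in_closed_set[of E "{u, v}" xs] \<open>w \<notin> {u, v}\<close> by auto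
qed

lemma mu1_le_card_bridges:
  assumes sg: "simple_graph V E" and con: "connected_graph V E" and "3 \<le> card V"
  shows "mu1 V E \<le> card (bridges E)"
proof -
  define L where "L = {v\<in>V. degree E v = 1}"
  define leaf_edge where "leaf_edge v = (THE e. e \<in> E \<and> v \<in> e)" for v
  have leaf_edge: "leaf_edge v \<in> E \<and> v \<in> leaf_edge v" if v: "v \<in> L" for v
  proof -
    have "card {e\<in>E. v \<in> e} = 1" using v unfolding L_def degree_def by simp
    then obtain e where e: "{e'\<in>E. v \<in> e'} = {e}" by (auto simp: card_1_singleton_iff)
    then have "leaf_edge v = e" unfolding leaf_edge_def by (intro the_equality) auto
    then show ?thesis using e by auto
  qed
  have "leaf_edge ` L \<subseteq> bridges E"
  proof
    fix e assume "e \<in> leaf_edge ` L"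
    then obtain v where v: "v \<in> L" "e = leaf_edge v" by blast
    have "e \<notin> cycle_edges C" if "is_cycle E C" for C
      using degree_ge_2_if_on_cycle[OF sg that] cycle_edge_subset_set leaf_edge[OF v(1)] v
      by (fastforce simp: L_def)
    then show "e \<in> bridges E" using leaf_edge[OF v(1)] v(2)
      unfolding bridges_def cycle_edge_sets_def by blast
  qed
  moreover have "inj_on leaf_edge L"
  proof (rule inj_onI)
    fix u v assume u: "u \<in> L" and v: "v \<in> L" and eq: "leaf_edge u = leaf_edge v"
    show "u = v"
    proof (rule ccontr)
      assume "u \<noteq> v"
      have "card (leaf_edge u) = 2" using sg leaf_edge[OF u] by (auto simp: simple_graph_def)
      moreover have "{u, v} \<subseteq> leaf_edge u" using leaf_edge[OF u] leaf_edge[OF v] eq by simp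
      ultimately have "leaf_edge u = {u, v}"
        using \<open>u \<noteq> v\<close> by (metis card.infinite card_2_iff card_subset_eq zero_neq_numeral)
      then show False
        using connected_leaves_not_adjacent[OF sg con assms(3), of u v] leaf_edge[OF u] u v
        unfolding L_def by simp
    qed
  qed
  moreover have "finite (bridges E)" using finite_edges[OF sg] by (simp add: bridges_def)
  ultimately have "card L \<le> card (bridges E)" by (metis card_inj_on_le)
  then show ?thesis unfolding mu1_def L_def .
qed

text \<open>The edges at a vertex on no bridge split into pairs, one pair for each cycle through it.\<close>

lemma cactus_even_degree_off_bridges:
  assumes cac: "cactus V E" and off: "\<forall>e\<in>bridges E. v \<notin> e"
  shows "even (degree E v)"
proof -
  let ?K = "cycle_edge_sets E"
  define Kv where "Kv = {k\<in>?K. \<exists>e\<in>k. v \<in> e}"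
  have fE: "finite E" using cac finite_edges by (auto simp: cactus_def)
  have "{e\<in>E. v \<in> e} = (\<Union>k\<in>Kv. {e\<in>k. v \<in> e})"
  proof (intro equalityI subsetI)
    fix e assume e: "e \<in> {e\<in>E. v \<in> e}"
    then have "e \<notin> bridges E" using off by blast
    then obtain k where "k \<in> ?K" "e \<in> k" using e unfolding bridges_def by blast
    then show "e \<in> (\<Union>k\<in>Kv. {e\<in>k. v \<in> e})" using e unfolding Kv_def by blast
  next
    fix e assume "e \<in> (\<Union>k\<in>Kv. {e\<in>k. v \<in> e})"
    then show "e \<in> {e\<in>E. v \<in> e}" using cycle_edge_sets_subset unfolding Kv_def by blast
  qed
  moreover have "card (\<Union>k\<in>Kv. {e\<in>k. v \<in> e}) = (\<Sum>k\<in>Kv. card {e\<in>k. v \<in> e})"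
  proof (rule card_UN_disjoint)
    show "finite Kv" using finite_cycle_edge_sets[OF fE] Kv_def by auto
    show "\<forall>k\<in>Kv. finite {e\<in>k. v \<in> e}"
      using cycle_edge_sets_subset fE finite_subset Kv_def by fastforce
    show "\<forall>k\<in>Kv. \<forall>k'\<in>Kv. k \<noteq> k' \<longrightarrow> {e\<in>k. v \<in> e} \<inter> {e\<in>k'. v \<in> e} = {}"
      using cactus_cycle_edge_sets_disjoint[OF cac] unfolding Kv_def pairwise_def disjnt_def by blast
  qed
  ultimately have "degree E v = (\<Sum>k\<in>Kv. card {e\<in>k. v \<in> e})" by (simp add: degree_def)
  also have "\<dots> = (\<Sum>k\<in>Kv. 2)"
  proof (rule sum.cong)
    fix k assume "k \<in> Kv"
    then obtain C e where C: "is_cycle E C" "k = cycle_edges C" and "e \<in> k" "v \<in> e"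
      unfolding Kv_def cycle_edge_sets_def by blast
    then have "v \<in> set C" using cycle_edge_subset_set by blast
    then show "card {e\<in>k. v \<in> e} = 2" using card_cycle_edges_at_vertex C by simp
  qed simp
  finally show ?thesis by simp
qed

lemma cactus_odd_degree_le_card_bridges:
  assumes cac: "cactus V E"
  shows "mu1 V E + mu_odd V E \<le> 2 * card (bridges E)"
proof -
  have fV: "finite V" and edges: "\<forall>e\<in>E. e \<subseteq> V \<and> card e = 2"
    using cac by (auto simp: cactus_def simple_graph_def)
  have fB: "finite (bridges E)" using cac finite_edges by (auto simp: cactus_def bridges_def)
  have "mu1 V E + mu_odd V E = card ({v\<in>V. degree E v = 1} \<union> {v\<in>V. odd (degree E v) \<and> degree E v > 1})"
    unfolding mu1_def mu_odd_def using fV by (subst card_Un_disjoint) auto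
  also have "\<dots> \<le> card (\<Union>(bridges E))"
  proof (rule card_mono)
    show "finite (\<Union>(bridges E))" using fB edges by (auto simp: bridges_def intro: finite_subset[OF _ fV])
    show "{v\<in>V. degree E v = 1} \<union> {v\<in>V. odd (degree E v) \<and> degree E v > 1} \<subseteq> \<Union>(bridges E)"
      using cactus_even_degree_off_bridges[OF cac] by fastforce
  qed
  also have "\<dots> \<le> (\<Sum>e\<in>bridges E. card e)" by (rule card_Union_le_sum_card)
  also have "\<dots> = 2 * card (bridges E)" using edges by (simp add: bridges_def)
  finally show ?thesis .
qed

lemma cactus_beta_le_card_bridges:
  assumes "cactus V E" and "3 \<le> card V"
  shows "beta V E \<le> card (bridges E)"
  using mu1_le_card_bridges[of V E] cactus_odd_degree_le_card_bridges[OF assms(1)] assms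
  unfolding beta_def cactus_def by simp

theorem theorem4p13:
  fixes V :: "'a set" and E :: "'a set set"
  assumes "bi_cactus V E"
    and "card V \<ge> 4"
    and "beta V E \<ge> 1"
  shows "int (card E) \<le> \<lfloor>(4 * (real (card V) - 1) - beta V E) / 3\<rfloor>"
proof -
  have cac: "cactus V E" and bip: "bipartite V E" using assms(1) by (auto simp: bi_cactus_def)
  have "V \<noteq> {}" using assms(2) by auto
  moreover have "\<And>C. is_cycle E C \<Longrightarrow> 4 \<le> length C" using bipartite_cycle_length_ge_4[OF bip] .
  ultimately have "4 * card E + card (bridges E) + 4 \<le> 4 * card V + card E"
    by (rule cactus_card_edges_bound[OF cac])
  then have "real (4 * card E + card (bridges E) + 4) \<le> real (4 * card V + card E)"
    by (rule of_nat_mono)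
  then have "4 * real (card E) + card (bridges E) + 4 \<le> 4 * real (card V) + card E"
    by (simp only: of_nat_add of_nat_mult of_nat_numeral)
  moreover have "beta V E \<le> card (bridges E)"
    using cactus_beta_le_card_bridges[OF cac] assms(2) by simp
  ultimately have "3 * real (card E) \<le> 4 * (real (card V) - 1) - beta V E"
    unfolding right_diff_distrib by linarith
  then show ?thesis by (simp add: le_floor_iff field_simps)
qed

end
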